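(* Let $\Gamma$ be a distance-regular graph with diameter $D\ge3$ and valency $k$. Let $\theta,\theta'$ be real numbers other than $k$ that form a tight pair. Then $$\Bigl(\theta+\frac{k}{a_1+1}\Bigr)\Bigl(\theta'+\frac{k}{a_1+1}\Bigr)=-\frac{k a_1 b_1}{(a_1+1)^2}.$$
   Context: $\Gamma$ is a finite connected undirected graph without loops or multiple edges, distance-regular with diameter $D$, intersection numbers $a_i,b_i,c_i$ ($c_0=0$, $b_D=0$), valency $k$, $c_i+a_i+b_i=k$. For $\theta\in\mathbb{R}$ the pseudo cosine sequence for $\theta$ is the sequence of reals $\sigma_0,\dots,\sigma_D$ with $\sigma_0=1$ and $c_i\sigma_{i-1}+a_i\sigma_i+b_i\sigma_{i+1}=\theta\sigma_i$ for $0\le i\le D-1$. Pseudo cosine sequences $\sigma_i$, $\rho_i$ form a tight pair if $(\sigma_i\rho_i)_{i=0}^D$ is a pseudo cosine sequence; reals $\theta,\theta'$ form a tight pair if their pseudo cosine sequences do. *)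

theory Defs
  imports Main "HOL.Real"
begin

definition adj_rel :: "'a set \<Rightarrow> ('a \<Rightarrow> 'a \<Rightarrow> bool) \<Rightarrow> ('a \<times> 'a) set" where
  "adj_rel V E = {(x, y). x \<in> V \<and> y \<in> V \<and> E x y}"

definition gdist :: "'a set \<Rightarrow> ('a \<Rightarrow> 'a \<Rightarrow> bool) \<Rightarrow> 'a \<Rightarrow> 'a \<Rightarrow> nat" where
  "gdist V E x y = (LEAST n. (x, y) \<in> adj_rel V E ^^ n)"

definition simple_graph :: "'a set \<Rightarrow> ('a \<Rightarrow> 'a \<Rightarrow> bool) \<Rightarrow> bool" where
  "simple_graph V E \<longleftrightarrow> finite V \<and> V \<noteq> {} \<and>
     (\<forall>x\<in>V. \<forall>y\<in>V. E x y \<longleftrightarrow> E y x) \<and> (\<forall>x\<in>V. \<not> E x x)"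

definition connected_graph :: "'a set \<Rightarrow> ('a \<Rightarrow> 'a \<Rightarrow> bool) \<Rightarrow> bool" where
  "connected_graph V E \<longleftrightarrow> (\<forall>x\<in>V. \<forall>y\<in>V. \<exists>n. (x, y) \<in> adj_rel V E ^^ n)"

definition diameter :: "'a set \<Rightarrow> ('a \<Rightarrow> 'a \<Rightarrow> bool) \<Rightarrow> nat" where
  "diameter V E = Max {gdist V E x y | x y. x \<in> V \<and> y \<in> V}"

text \<open>a, b, c are intersection numbers of the graph: for all x, y at distance i,
  c i = |Gamma_{i-1}(x) \<inter> Gamma(y)|, a i = |Gamma_i(x) \<inter> Gamma(y)|,
  b i = |Gamma_{i+1}(x) \<inter> Gamma(y)| (so c 0 = 0 automatically).\<close>
definition intersection_numbers ::
  "'a set \<Rightarrow> ('a \<Rightarrow> 'a \<Rightarrow> bool) \<Rightarrow> (nat \<Rightarrow> nat) \<Rightarrow> (nat \<Rightarrow> nat) \<Rightarrow> (nat \<Rightarrow> nat) \<Rightarrow> bool" where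
  "intersection_numbers V E a b c \<longleftrightarrow>
     (\<forall>x\<in>V. \<forall>y\<in>V.
        c (gdist V E x y) = card {z\<in>V. E y z \<and> gdist V E x z + 1 = gdist V E x y} \<and>
        a (gdist V E x y) = card {z\<in>V. E y z \<and> gdist V E x z = gdist V E x y} \<and>
        b (gdist V E x y) = card {z\<in>V. E y z \<and> gdist V E x z = gdist V E x y + 1})"

definition distance_regular :: "'a set \<Rightarrow> ('a \<Rightarrow> 'a \<Rightarrow> bool) \<Rightarrow> bool" where
  "distance_regular V E \<longleftrightarrow> simple_graph V E \<and> connected_graph V E \<and>
     (\<exists>a b c. intersection_numbers V E a b c)"

text \<open>Pseudo cosine sequence for theta (only the values at 0..D matter).\<close>
definition pseudo_cosine ::
  "(nat \<Rightarrow> nat) \<Rightarrow> (nat \<Rightarrow> nat) \<Rightarrow> (nat \<Rightarrow> nat) \<Rightarrow> nat \<Rightarrow> real \<Rightarrow> (nat \<Rightarrow> real) \<Rightarrow> bool" where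
  "pseudo_cosine a b c D \<theta> \<sigma> \<longleftrightarrow> \<sigma> 0 = 1 \<and>
     (\<forall>i<D. real (c i) * (if i = 0 then 0 else \<sigma> (i - 1)) + real (a i) * \<sigma> i
              + real (b i) * \<sigma> (Suc i) = \<theta> * \<sigma> i)"

definition tight_pair_seq ::
  "(nat \<Rightarrow> nat) \<Rightarrow> (nat \<Rightarrow> nat) \<Rightarrow> (nat \<Rightarrow> nat) \<Rightarrow> nat \<Rightarrow> (nat \<Rightarrow> real) \<Rightarrow> (nat \<Rightarrow> real) \<Rightarrow> bool" where
  "tight_pair_seq a b c D \<sigma> \<rho> \<longleftrightarrow>
     (\<exists>\<eta>. pseudo_cosine a b c D \<eta> (\<lambda>i. \<sigma> i * \<rho> i))"

definition tight_pair ::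
  "(nat \<Rightarrow> nat) \<Rightarrow> (nat \<Rightarrow> nat) \<Rightarrow> (nat \<Rightarrow> nat) \<Rightarrow> nat \<Rightarrow> real \<Rightarrow> real \<Rightarrow> bool" where
  "tight_pair a b c D \<theta> \<theta>' \<longleftrightarrow>
     (\<exists>\<sigma> \<rho>. pseudo_cosine a b c D \<theta> \<sigma> \<and> pseudo_cosine a b c D \<theta>' \<rho> \<and>
             tight_pair_seq a b c D \<sigma> \<rho>)"

end

theory Submission
  imports Defs
begin

text \<open>Counting the neighbours of a vertex and of one of its neighbours gives \<open>a 0 = 0\<close>,
  \<open>b 0 = k\<close>, \<open>c 1 = 1\<close> and \<open>1 + a 1 + b 1 = k\<close>. Hence the recurrence at \<open>i = 0\<close> gives
  \<open>\<theta> = k \<sigma>\<^sub>1\<close>, \<open>\<theta>' = k \<rho>\<^sub>1\<close> and \<open>\<eta> = k \<sigma>\<^sub>1 \<rho>\<^sub>1\<close> for the product sequence, while the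
  recurrences at \<open>i = 1\<close> determine \<open>b 1 \<sigma>\<^sub>2\<close> and \<open>b 1 \<rho>\<^sub>2\<close>. Eliminating them from the
  recurrence of the product at \<open>i = 1\<close> leaves a quartic relation between \<open>\<sigma>\<^sub>1\<close> and \<open>\<rho>\<^sub>1\<close>
  which factors as \<open>(\<sigma>\<^sub>1 - 1)(\<rho>\<^sub>1 - 1) P = 0\<close>. Since \<open>\<theta>, \<theta>' \<noteq> k\<close>, the quadratic factor
  \<open>P\<close> vanishes, and \<open>k P = 0\<close> is the claimed identity.\<close>

lemma gdist_le:
  assumes "(x, y) \<in> adj_rel V E ^^ n"
  shows "gdist V E x y \<le> n"
  using assms unfolding gdist_def by (rule Least_le)

lemma gdist_walk:
  assumes "(x, y) \<in> adj_rel V E ^^ n"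
  shows "(x, y) \<in> adj_rel V E ^^ gdist V E x y"
  using assms unfolding gdist_def by (rule LeastI)

lemma gdist_self [simp]: "gdist V E x x = 0"
  unfolding gdist_def by (rule Least_equality) auto

lemma gdist_eq_0_iff:
  assumes "(x, y) \<in> adj_rel V E ^^ n"
  shows "gdist V E x y = 0 \<longleftrightarrow> x = y"
  using gdist_walk[OF assms] by (metis relpow.simps(1) pair_in_Id_conv gdist_self)

lemma gdist_adjacent:
  assumes "x \<in> V" "y \<in> V" "E x y" "x \<noteq> y"
  shows "gdist V E x y = 1"
proof -
  have walk: "(x, y) \<in> adj_rel V E ^^ 1"
    using assms by (simp add: adj_rel_def)
  have "gdist V E x y \<noteq> 0"
    using gdist_eq_0_iff[OF walk] assms(4) by simp
  with gdist_le[OF walk] show ?thesis by simp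
qed

lemma walk_two:
  assumes "x \<in> V" "y \<in> V" "E x y" "z \<in> V" "E y z"
  shows "(x, z) \<in> adj_rel V E ^^ 2"
  using assms by (auto simp: adj_rel_def numeral_2_eq_2 relcomp_unfold)

lemma intersection_numbersD:
  assumes "intersection_numbers V E a b c" "x \<in> V" "y \<in> V"
  shows "c (gdist V E x y) = card {z\<in>V. E y z \<and> gdist V E x z + 1 = gdist V E x y}"
    and "a (gdist V E x y) = card {z\<in>V. E y z \<and> gdist V E x z = gdist V E x y}"
    and "b (gdist V E x y) = card {z\<in>V. E y z \<and> gdist V E x z = gdist V E x y + 1}"
  using assms unfolding intersection_numbers_def by blast+

lemma intersection_numbers_0:
  assumes "simple_graph V E" "intersection_numbers V E a b c"
    and "\<forall>x\<in>V. card {y\<in>V. E x y} = k"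
  shows "a 0 = 0" and "b 0 = k"
proof -
  obtain x where x: "x \<in> V"
    using assms(1) by (auto simp: simple_graph_def)
  have neighbour_dist: "gdist V E x z = 1" if "z \<in> V" "E x z" for z
    using gdist_adjacent[of x V z E] that x assms(1) by (auto simp: simple_graph_def)
  have "a 0 = card {z\<in>V. E x z \<and> gdist V E x z = 0}"
    using intersection_numbersD(2)[OF assms(2) x x] by simp
  also have "{z\<in>V. E x z \<and> gdist V E x z = 0} = {}"
    using neighbour_dist by auto
  finally show "a 0 = 0" by simp
  have "b 0 = card {z\<in>V. E x z \<and> gdist V E x z = 1}"
    using intersection_numbersD(3)[OF assms(2) x x] by simp
  also have "{z\<in>V. E x z \<and> gdist V E x z = 1} = {z\<in>V. E x z}"
    using neighbour_dist by auto
  finally show "b 0 = k"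
    using assms(3) x by simp
qed

lemma intersection_numbers_1:
  assumes "simple_graph V E" "intersection_numbers V E a b c"
    and "\<forall>x\<in>V. card {y\<in>V. E x y} = k" "k \<noteq> 0"
  shows "c 1 = 1" and "1 + a 1 + b 1 = k"
proof -
  from assms(1) have fin: "finite V" and nonempty: "V \<noteq> {}"
    and sym: "\<forall>x\<in>V. \<forall>y\<in>V. E x y \<longleftrightarrow> E y x" and irrefl: "\<forall>x\<in>V. \<not> E x x"
    by (auto simp: simple_graph_def)
  obtain x where x: "x \<in> V"
    using nonempty by auto
  then have "{y\<in>V. E x y} \<noteq> {}"
    using assms(3,4) by fastforce
  then obtain y where y: "y \<in> V" "E x y"
    by auto
  have xy: "gdist V E x y = 1"
    using gdist_adjacent[of x V y E] x y irrefl by auto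
  let ?N = "\<lambda>i. {z\<in>V. E y z \<and> gdist V E x z = i}"
  have numbers: "c 1 = card (?N 0)" "a 1 = card (?N 1)" "b 1 = card (?N 2)"
    using intersection_numbersD[OF assms(2) x y(1)] unfolding xy by (simp_all add: numeral_2_eq_2)
  have "?N 0 = {x}"
  proof
    show "?N 0 \<subseteq> {x}"
      using gdist_eq_0_iff[OF walk_two[of x V y E, OF x y]] by auto
    show "{x} \<subseteq> ?N 0"
      using x y sym by auto
  qed
  then show c1: "c 1 = 1"
    using numbers(1) by simp
  have "{z\<in>V. E y z} = ?N 0 \<union> ?N 1 \<union> ?N 2"
    using gdist_le[OF walk_two[of x V y E, OF x y]] by fastforce
  then have "card {z\<in>V. E y z} = card (?N 0) + card (?N 1) + card (?N 2)"
    using fin by (simp add: card_Un_disjoint disjoint_iff)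
  then show "1 + a 1 + b 1 = k"
    using assms(3) y(1) numbers c1 by simp
qed

lemma pseudo_cosine_recurrence_0:
  assumes "pseudo_cosine a b c D \<theta> \<sigma>" "0 < D" "a 0 = 0" "b 0 = k"
  shows "\<theta> = real k * \<sigma> 1"
  using assms unfolding pseudo_cosine_def by (auto dest!: spec[of _ 0])

lemma pseudo_cosine_recurrence_1:
  assumes "pseudo_cosine a b c D \<theta> \<sigma>" "1 < D" "c 1 = 1"
  shows "1 + real (a 1) * \<sigma> 1 + real (b 1) * \<sigma> 2 = \<theta> * \<sigma> 1"
  using assms unfolding pseudo_cosine_def by (auto dest!: spec[of _ 1] simp: numeral_2_eq_2)

lemma tight_pair_quartic_factorization:
  fixes A B K s r s2 r2 :: real
  assumes "B = K - A - 1"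
    and "1 + A * s + B * s2 = K * s * s"
    and "1 + A * r + B * r2 = K * r * r"
    and "1 + A * (s * r) + B * (s2 * r2) = K * s * r * (s * r)"
  shows "(s - 1) * (r - 1) * ((A + 1)^2 * K * s * r + (A + 1) * K * (s + r) + K + A * B) = 0"
  using assms by algebra

lemma tight_pair_hyperbola:
  fixes a b c :: "nat \<Rightarrow> nat" and k :: nat
  assumes "tight_pair a b c D \<theta> \<theta>'" "1 < D"
    and "a 0 = 0" "b 0 = k" "c 1 = 1" "1 + a 1 + b 1 = k"
    and "\<theta> \<noteq> real k" "\<theta>' \<noteq> real k"
  shows "(\<theta> + real k / (real (a 1) + 1)) * (\<theta>' + real k / (real (a 1) + 1))
           = - (real k * real (a 1) * real (b 1)) / (real (a 1) + 1)^2"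
proof -
  obtain \<sigma> \<rho> \<eta> where \<sigma>: "pseudo_cosine a b c D \<theta> \<sigma>" and \<rho>: "pseudo_cosine a b c D \<theta>' \<rho>"
    and \<sigma>\<rho>: "pseudo_cosine a b c D \<eta> (\<lambda>i. \<sigma> i * \<rho> i)"
    using assms(1) unfolding tight_pair_def tight_pair_seq_def by blast
  define A B K where "A = real (a 1)" and "B = real (b 1)" and "K = real k"
  have \<theta>: "\<theta> = K * \<sigma> 1" and \<theta>': "\<theta>' = K * \<rho> 1" and \<eta>: "\<eta> = K * (\<sigma> 1 * \<rho> 1)"
    using pseudo_cosine_recurrence_0[OF \<sigma> _ assms(3,4)] pseudo_cosine_recurrence_0[OF \<rho> _ assms(3,4)]
      pseudo_cosine_recurrence_0[OF \<sigma>\<rho> _ assms(3,4)] assms(2) K_def by auto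
  have "B = K - A - 1"
    using assms(6) unfolding A_def B_def K_def by linarith
  then have "(\<sigma> 1 - 1) * (\<rho> 1 - 1) * ((A + 1)^2 * K * \<sigma> 1 * \<rho> 1 + (A + 1) * K * (\<sigma> 1 + \<rho> 1) + K + A * B) = 0"
    using pseudo_cosine_recurrence_1[OF \<sigma> assms(2,5)] pseudo_cosine_recurrence_1[OF \<rho> assms(2,5)]
      pseudo_cosine_recurrence_1[OF \<sigma>\<rho> assms(2,5)] \<theta> \<theta>' \<eta>
    unfolding A_def B_def by (intro tight_pair_quartic_factorization) (simp_all add: mult.assoc)
  moreover have "\<sigma> 1 \<noteq> 1" "\<rho> 1 \<noteq> 1"
    using assms(7,8) \<theta> \<theta>' K_def by auto
  ultimately have "(A + 1)^2 * K * \<sigma> 1 * \<rho> 1 + (A + 1) * K * (\<sigma> 1 + \<rho> 1) + K + A * B = 0"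
    by simp
  then have "(A + 1)^2 * \<theta> * \<theta>' + (A + 1) * K * (\<theta> + \<theta>') + K * K = - K * A * B"
    unfolding \<theta> \<theta>' by algebra
  moreover have "A + 1 \<noteq> 0"
    unfolding A_def by (simp add: add_nonneg_pos)
  ultimately have "(\<theta> + K / (A + 1)) * (\<theta>' + K / (A + 1)) = - (K * A * B) / (A + 1)^2"
    by (simp add: field_simps power2_eq_square)
  then show ?thesis
    unfolding A_def B_def K_def .
qed

theorem lemma4p4:
  fixes V :: "'v set" and E :: "'v \<Rightarrow> 'v \<Rightarrow> bool"
    and a b c :: "nat \<Rightarrow> nat" and D k :: nat and \<theta> \<theta>' :: real
  assumes "distance_regular V E"
    and "intersection_numbers V E a b c"
    and "D = diameter V E" and "D \<ge> 3"
    and "\<forall>x\<in>V. card {y\<in>V. E x y} = k"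
    and "\<theta> \<noteq> real k" and "\<theta>' \<noteq> real k"
    and "tight_pair a b c D \<theta> \<theta>'"
  shows "(\<theta> + real k / (real (a 1) + 1)) * (\<theta>' + real k / (real (a 1) + 1))
           = - (real k * real (a 1) * real (b 1)) / (real (a 1) + 1)^2"
proof -
  have graph: "simple_graph V E"
    using assms(1) by (simp add: distance_regular_def)
  note a0_b0 = intersection_numbers_0[OF graph assms(2,5)]
  obtain \<sigma> where "pseudo_cosine a b c D \<theta> \<sigma>"
    using assms(8) unfolding tight_pair_def by blast
  then have "\<theta> = real k * \<sigma> 1"
    using pseudo_cosine_recurrence_0 a0_b0 assms(4) by simp
  then have "k \<noteq> 0"
    using assms(6) by auto
  note c1_sum = intersection_numbers_1[OF graph assms(2,5) this]
  show ?thesis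
    by (rule tight_pair_hyperbola[OF assms(8) _ a0_b0 c1_sum assms(6,7)]) (use assms(4) in linarith)
qed

end
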